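(* Let $\gamma\in\{0,1\}^p$, let $\psi>0$, and let the prior on $\beta_\gamma$ be $\mathcal{N}_{|\gamma|_0}(0,s^2I)$ with $s>0$. Assume $X_\gamma$ has full column rank. Define $m_n(\beta_\gamma)=-nQ_n(y,X_\gamma;\beta_\gamma,\psi)-\log\pi(\beta_\gamma)$. (i) If the mean and variance functions satisfy, for every $i=1,\dots,n$ and every $\beta_\gamma\in\mathbb{R}^{|\gamma|_0}$, $$\frac{V'(\mu(x_{i\gamma}^\top\beta_\gamma))}{V(\mu(x_{i\gamma}^\top\beta_\gamma))}\big(\mu'(x_{i\gamma}^\top\beta_\gamma)\big)^2-\mu''(x_{i\gamma}^\top\beta_\gamma)=0,$$ then $m_n$ is convex in $\beta_\gamma$. (ii) Suppose $\mathbb{E}_{F_0}[y_i\mid x_i]=\mu(x_i^\top\beta^\ast)$ for all $i$, for some $\beta^\ast\in\mathbb{R}^p$, and let $\gamma^\ast_j=\mathbb{I}(\beta^\ast_j\ne0)$. If $\gamma^\ast\subseteq\gamma$, then $$\mathbb{E}_{F_0}\big[\nabla^2_{\beta_\gamma}m_n(\beta^\ast_\gamma)\big]=\frac1\psi X_\gamma^\top D^\ast X_\gamma+\frac1{s^2}I,$$ which is positive definite, where $D^\ast=\mathrm{diag}(d_1^\ast,\dots,d_n^\ast)$ with $d_i^\ast=\frac{\mu'(x_{i\gamma}^\top\beta^\ast_\gamma)^2}{V(\mu(x_{i\gamma}^\top\beta^\ast_\gamma))}$, and $\beta^\ast_\gamma$ is the subvector of $\beta^\ast$ indexed by $\ga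mma$.
   Context: $y_i\in\mathcal{Y}\subseteq\mathbb{R}$, $x_i\in\mathbb{R}^p$, $X\in\mathbb{R}^{n\times p}$ with rows $x_i^\top$. A model is $\gamma\in\{0,1\}^p$, $|\gamma|_0=\sum_j\gamma_j$, and $\beta_\gamma,X_\gamma,x_{i\gamma}$ are the restrictions to coordinates with $\gamma_j=1$; $\gamma^\ast\subseteq\gamma$ means $\gamma^\ast_j=1\Rightarrow\gamma_j=1$. The inverse link $\mu:\mathbb{R}\to\mathcal{Y}$ is twice differentiable and the variance function $V:\mathcal{Y}\to(0,\infty)$ is differentiable. The quasi-log-likelihood is $\ell_\psi(y_i;x_i,\beta)=\int_a^{\mu(x_i^\top\beta)}\frac{y_i-t}{\psi V(t)}dt$ for a fixed $a\in\mathcal{Y}$, and $Q_n(y,X_\gamma;\beta_\gamma,\psi)=\frac1n\sum_{i=1}^n\ell_\psi(y_i;x_{i\gamma},\beta_\gamma)$. *)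

theory Defs
  imports "HOL-Probability.Probability"
begin

text \<open>Coordinates j of the p-dimensional covariate space are the elements of a finite
  type 'p; a model gamma in {0,1}^p is a set of coordinates. A vector beta_gamma in
  R^{|gamma|} is represented by a vector of real^'p supported on gamma.\<close>

definition model_space :: "'p::finite set \<Rightarrow> (real^'p) set" where
  "model_space \<gamma> = {b. \<forall>j. j \<notin> \<gamma> \<longrightarrow> b $ j = 0}"

definition lin_pred :: "real^'p::finite \<Rightarrow> 'p set \<Rightarrow> real^'p \<Rightarrow> real" where
  "lin_pred xi \<gamma> b = (\<Sum>j\<in>\<gamma>. xi $ j * b $ j)"

definition restr :: "'p::finite set \<Rightarrow> real^'p \<Rightarrow> real^'p" where
  "restr \<gamma> b = (\<chi> j. if j \<in> \<gamma> then b $ j else 0)"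

definition oint :: "(real \<Rightarrow> real) \<Rightarrow> real \<Rightarrow> real \<Rightarrow> real" where
  "oint f a b = (if a \<le> b then integral {a..b} f else - integral {b..a} f)"

definition qll :: "(real \<Rightarrow> real) \<Rightarrow> (real \<Rightarrow> real) \<Rightarrow> real \<Rightarrow> real \<Rightarrow> real \<Rightarrow> real \<Rightarrow> real" where
  "qll \<mu> V a \<psi> yi \<eta> = oint (\<lambda>t. (yi - t) / (\<psi> * V t)) a (\<mu> \<eta>)"

definition Qn :: "(real \<Rightarrow> real) \<Rightarrow> (real \<Rightarrow> real) \<Rightarrow> real \<Rightarrow> real \<Rightarrow> nat \<Rightarrow> (nat \<Rightarrow> real)
    \<Rightarrow> (nat \<Rightarrow> real^'p::finite) \<Rightarrow> 'p set \<Rightarrow> real^'p \<Rightarrow> real" where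
  "Qn \<mu> V a \<psi> n y x \<gamma> b = (1 / real n) * (\<Sum>i<n. qll \<mu> V a \<psi> (y i) (lin_pred (x i) \<gamma> b))"

definition gauss_prior :: "real \<Rightarrow> 'p::finite set \<Rightarrow> real^'p \<Rightarrow> real" where
  "gauss_prior s \<gamma> b =
     (2 * pi * s\<^sup>2) powr (- real (card \<gamma>) / 2) * exp (- (\<Sum>j\<in>\<gamma>. (b $ j)\<^sup>2) / (2 * s\<^sup>2))"

definition mn :: "(real \<Rightarrow> real) \<Rightarrow> (real \<Rightarrow> real) \<Rightarrow> real \<Rightarrow> real \<Rightarrow> real \<Rightarrow> nat \<Rightarrow> (nat \<Rightarrow> real)
    \<Rightarrow> (nat \<Rightarrow> real^'p::finite) \<Rightarrow> 'p set \<Rightarrow> real^'p \<Rightarrow> real" where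
  "mn \<mu> V a \<psi> s n y x \<gamma> b = - real n * Qn \<mu> V a \<psi> n y x \<gamma> b - ln (gauss_prior s \<gamma> b)"

definition partial_deriv :: "(real^'p::finite \<Rightarrow> real) \<Rightarrow> 'p \<Rightarrow> real^'p \<Rightarrow> real" where
  "partial_deriv f k b = deriv (\<lambda>t. f (b + t *\<^sub>R axis k 1)) 0"

definition hessian_entry :: "(real^'p::finite \<Rightarrow> real) \<Rightarrow> 'p \<Rightarrow> 'p \<Rightarrow> real^'p \<Rightarrow> real" where
  "hessian_entry f j k b = partial_deriv (\<lambda>c. partial_deriv f k c) j b"

definition full_col_rank :: "nat \<Rightarrow> (nat \<Rightarrow> real^'p::finite) \<Rightarrow> 'p set \<Rightarrow> bool" where
  "full_col_rank n x \<gamma> \<longleftrightarrow>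
     (\<forall>c::'p \<Rightarrow> real. (\<forall>i<n. (\<Sum>j\<in>\<gamma>. x i $ j * c j) = 0) \<longrightarrow> (\<forall>j\<in>\<gamma>. c j = 0))"

definition pos_def_on :: "'p set \<Rightarrow> ('p \<Rightarrow> 'p \<Rightarrow> real) \<Rightarrow> bool" where
  "pos_def_on \<gamma> A \<longleftrightarrow>
     (\<forall>c::'p \<Rightarrow> real. (\<exists>j\<in>\<gamma>. c j \<noteq> 0) \<longrightarrow> (\<Sum>j\<in>\<gamma>. \<Sum>k\<in>\<gamma>. c j * A j k * c k) > 0)"

end

theory Submission
  imports Defs
begin

text \<open>Differentiating the quasi-log-likelihood twice in the linear predictor \<eta> gives
  \<open>\<partial>\<^sup>2 \<ell>(y; \<eta>) = - \<mu>'(\<eta>)\<^sup>2 / (\<psi> V(\<mu> \<eta>)) + (y - \<mu> \<eta>) w'(\<eta>)\<close> with \<open>w = \<mu>' / (\<psi> V \<circ> \<mu>)\<close>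
  (\<open>score_weight\<close>).
  The condition in (i) says exactly \<open>w' = 0\<close>, so every \<open>-\<ell>\<close> is convex in \<eta>, hence in
  \<open>\<beta>\<^sub>\<gamma>\<close>, and the Gaussian prior only adds a convex quadratic. In (ii) the second summand has
  mean zero at the true parameter, which leaves \<open>X\<^sup>T D X / \<psi> + I / s\<^sup>2\<close>. The ridge term
  \<open>I / s\<^sup>2\<close> alone already makes this positive definite.\<close>

lemma oint_eq_integral_diff:
  fixes f :: "real \<Rightarrow> real"
  assumes cont: "continuous_on {c..d} f" and a: "a \<in> {c..d}" and v: "v \<in> {c..d}"
  shows "oint f a v = integral {c..v} f - integral {c..a} f"
proof (cases "a \<le> v")
  case True
  have "f integrable_on {c..v}"
    by (rule integrable_continuous_real) (rule continuous_on_subset[OF cont], use v in auto)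
  then have "integral {c..a} f + integral {a..v} f = integral {c..v} f"
    using Henstock_Kurzweil_Integration.integral_combine[of c a v f] a True by auto
  then show ?thesis using True by (simp add: oint_def)
next
  case False
  have "f integrable_on {c..a}"
    by (rule integrable_continuous_real) (rule continuous_on_subset[OF cont], use a in auto)
  then have "integral {c..v} f + integral {v..a} f = integral {c..a} f"
    using Henstock_Kurzweil_Integration.integral_combine[of c v a f] v False by auto
  then show ?thesis using False by (simp add: oint_def)
qed

lemma oint_has_real_derivative:
  fixes f :: "real \<Rightarrow> real"
  assumes cont: "continuous_on {c..d} f" and a: "a \<in> {c..d}" and u: "u \<in> {c..d}"
  shows "(oint f a has_real_derivative f u) (at u within {c..d})"
proof -
  have "((\<lambda>v. integral {c..v} f - integral {c..a} f) has_real_derivative f u) (at u within {c..d})"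
    using integral_has_real_derivative[OF cont u] by (auto intro!: derivative_eq_intros)
  then show ?thesis
    by (rule has_field_derivative_transform_within[OF _ zero_less_one u])
       (simp add: oint_eq_integral_diff[OF cont a])
qed

text \<open>The chain rule needs the derivative of \<open>oint f a\<close> only within the image of a closed
  ball under \<open>g\<close>, which is a compact interval inside \<open>Y\<close>.\<close>

lemma oint_comp_has_real_derivative:
  fixes f g g' :: "real \<Rightarrow> real"
  assumes Y: "is_interval Y" and a: "a \<in> Y" and f: "continuous_on Y f"
    and g_range: "\<And>\<eta>. g \<eta> \<in> Y" and g: "\<And>\<eta>. (g has_real_derivative g' \<eta>) (at \<eta>)"
  shows "((\<lambda>\<eta>. oint f a (g \<eta>)) has_real_derivative f (g \<eta>) * g' \<eta>) (at \<eta>)"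
proof -
  have "continuous_on (cball \<eta> 1) g"
    using g by (meson DERIV_isCont continuous_at_imp_continuous_on)
  then obtain c d where cd: "g ` cball \<eta> 1 = {c..d}"
    using connected_compact_interval_1 connected_continuous_image compact_continuous_image
    by (metis compact_cball connected_cball)
  have "g \<eta> \<in> {c..d}"
    using cd by (metis centre_in_cball image_eqI zero_le_one)
  then have "c \<in> g ` cball \<eta> 1" "d \<in> g ` cball \<eta> 1"
    by (auto simp: cd)
  then have "c \<in> Y" "d \<in> Y"
    using g_range by auto
  define K where "K = {min a c..max a d}"
  have "K \<subseteq> Y"
    using Y a \<open>c \<in> Y\<close> \<open>d \<in> Y\<close> unfolding K_def is_interval_1
    by (metis atLeastAtMost_iff min_def max_def subsetI)
  have "(oint f a has_real_derivative f (g \<eta>)) (at (g \<eta>) within K)"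
    using \<open>g \<eta> \<in> {c..d}\<close> continuous_on_subset[OF f \<open>K \<subseteq> Y\<close>]
    by (intro oint_has_real_derivative[of "min a c" "max a d", folded K_def]) (auto simp: K_def)
  then have "(oint f a has_real_derivative f (g \<eta>)) (at (g \<eta>) within g ` cball \<eta> 1)"
    by (rule has_field_derivative_subset) (auto simp: cd K_def)
  from DERIV_image_chain[OF this has_field_derivative_at_within[OF g]]
  show ?thesis
    by (simp add: o_def at_within_interior[of \<eta> "cball \<eta> 1"])
qed

lemma nth_add_scaleR_axis: "(b + t *\<^sub>R axis k 1) $ j = b $ j + t * (if j = k then 1 else 0)"
  by (simp add: axis_def)

lemma lin_pred_along_axis:
  assumes k: "k \<in> \<gamma>"
  shows "lin_pred xi \<gamma> (b + t *\<^sub>R axis k 1) = lin_pred xi \<gamma> b + t * xi $ k"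
proof -
  have "lin_pred xi \<gamma> (b + t *\<^sub>R axis k 1)
      = (\<Sum>j\<in>\<gamma>. xi $ j * b $ j + (if j = k then t * xi $ k else 0))"
    unfolding lin_pred_def by (rule sum.cong) (auto simp: axis_def algebra_simps)
  then show ?thesis
    using k by (simp add: sum.distrib lin_pred_def)
qed

lemma lin_pred_has_real_derivative_along_axis:
  assumes h: "(h has_real_derivative D) (at (lin_pred xi \<gamma> b))" and k: "k \<in> \<gamma>"
  shows "((\<lambda>t. h (lin_pred xi \<gamma> (b + t *\<^sub>R axis k 1))) has_real_derivative D * xi $ k) (at 0)"
proof -
  have "((\<lambda>t. lin_pred xi \<gamma> b + t * xi $ k) has_real_derivative xi $ k) (at 0)"
    by (auto intro!: derivative_eq_intros)
  from DERIV_chain'[OF this, of h D] h show ?thesis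
    by (simp add: lin_pred_along_axis[OF k])
qed

lemma sum_power2_along_axis:
  fixes b :: "real^'p::finite"
  assumes k: "k \<in> \<gamma>"
  shows "(\<Sum>j\<in>\<gamma>. ((b + t *\<^sub>R axis k 1) $ j)\<^sup>2) = (\<Sum>j\<in>\<gamma>. (b $ j)\<^sup>2) + 2 * t * b $ k + t\<^sup>2"
proof -
  have "(\<Sum>j\<in>\<gamma>. ((b + t *\<^sub>R axis k 1) $ j)\<^sup>2)
      = (\<Sum>j\<in>\<gamma>. (b $ j)\<^sup>2 + (if j = k then 2 * t * b $ k + t\<^sup>2 else 0))"
    by (rule sum.cong) (auto simp: axis_def power2_eq_square algebra_simps)
  then show ?thesis
    using k by (simp add: sum.distrib)
qed

lemma partial_derivI:
  "((\<lambda>t. f (b + t *\<^sub>R axis k 1)) has_real_derivative D) (at 0) \<Longrightarrow> partial_deriv f k b = D"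
  unfolding partial_deriv_def by (rule DERIV_imp_deriv)

lemma lin_pred_restr:
  assumes "{j. b $ j \<noteq> 0} \<subseteq> \<gamma>"
  shows "lin_pred xi \<gamma> (restr \<gamma> b) = (\<Sum>j\<in>UNIV. xi $ j * b $ j)"
proof -
  have "lin_pred xi \<gamma> (restr \<gamma> b) = (\<Sum>j\<in>\<gamma>. xi $ j * b $ j)"
    unfolding lin_pred_def restr_def by (rule sum.cong) auto
  also have "\<dots> = (\<Sum>j\<in>UNIV. xi $ j * b $ j)"
    by (rule sum.mono_neutral_left) (use assms in auto)
  finally show ?thesis .
qed

lemma linear_lin_pred: "linear (lin_pred xi \<gamma>)"
  by (rule linearI) (simp_all add: lin_pred_def sum.distrib sum_distrib_left algebra_simps)

lemma convex_model_space: "convex (model_space \<gamma>)"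
  unfolding convex_def model_space_def by auto

lemma convex_on_sum_fun:
  assumes "finite I" "convex S" "\<And>i. i \<in> I \<Longrightarrow> convex_on S (f i)"
  shows "convex_on S (\<lambda>x. \<Sum>i\<in>I. f i x)"
  using assms
  by (induction I rule: finite_induct) (auto simp: convex_on_const intro!: convex_on_add)

lemma convex_on_comp_linear:
  assumes "linear L" and "convex S" and "convex_on (L ` S) h"
  shows "convex_on S (\<lambda>x. h (L x))"
  using assms by (auto simp: convex_on_def linear_add linear_scale)

lemma quadratic_form_weighted_gram:
  fixes x :: "nat \<Rightarrow> real^'p::finite"
  shows "(\<Sum>j\<in>J. \<Sum>k\<in>J. v j * (\<Sum>i<n. x i $ j * d i * x i $ k) * v k)
    = (\<Sum>i<n. d i * (\<Sum>j\<in>J. v j * x i $ j)\<^sup>2)"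
proof -
  have "(\<Sum>j\<in>J. \<Sum>k\<in>J. v j * (\<Sum>i<n. x i $ j * d i * x i $ k) * v k)
      = (\<Sum>j\<in>J. \<Sum>k\<in>J. \<Sum>i<n. d i * (v j * x i $ j) * (v k * x i $ k))"
    by (simp add: sum_distrib_left sum_distrib_right algebra_simps)
  also have "\<dots> = (\<Sum>i<n. \<Sum>j\<in>J. \<Sum>k\<in>J. d i * (v j * x i $ j) * (v k * x i $ k))"
    by (simp only: sum.swap[where A = J and B = "{..<n}"])
  also have "\<dots> = (\<Sum>i<n. d i * (\<Sum>j\<in>J. v j * x i $ j)\<^sup>2)"
    by (simp add: power2_eq_square sum_distrib_left sum_distrib_right algebra_simps)
  finally show ?thesis .
qed

lemma quadratic_form_diagonal:
  fixes v :: "'p::finite \<Rightarrow> real"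
  shows "(\<Sum>j\<in>J. \<Sum>k\<in>J. v j * (if j = k then r else 0) * v k) = r * (\<Sum>j\<in>J. (v j)\<^sup>2)"
  unfolding sum_distrib_left
proof (rule sum.cong)
  fix j assume "j \<in> J"
  have "(\<Sum>k\<in>J. v j * (if j = k then r else 0) * v k) = (\<Sum>k\<in>J. if j = k then r * (v j)\<^sup>2 else 0)"
    by (rule sum.cong) (auto simp: power2_eq_square)
  then show "(\<Sum>k\<in>J. v j * (if j = k then r else 0) * v k) = r * (v j)\<^sup>2"
    using \<open>j \<in> J\<close> by simp
qed simp

lemma quadratic_form_gram_plus_ridge:
  fixes x :: "nat \<Rightarrow> real^'p::finite"
  shows "(\<Sum>j\<in>J. \<Sum>k\<in>J. v j * (c * (\<Sum>i<n. x i $ j * d i * x i $ k) + (if j = k then r else 0)) * v k)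
    = c * (\<Sum>i<n. d i * (\<Sum>j\<in>J. v j * x i $ j)\<^sup>2) + r * (\<Sum>j\<in>J. (v j)\<^sup>2)"
proof -
  define G where "G j k = (\<Sum>i<n. x i $ j * d i * x i $ k)" for j k
  have "(\<Sum>j\<in>J. \<Sum>k\<in>J. v j * (c * G j k + (if j = k then r else 0)) * v k)
      = (\<Sum>j\<in>J. \<Sum>k\<in>J. c * (v j * G j k * v k) + v j * (if j = k then r else 0) * v k)"
    by (intro sum.cong refl) (simp add: algebra_simps)
  also have "\<dots> = c * (\<Sum>j\<in>J. \<Sum>k\<in>J. v j * G j k * v k)
      + (\<Sum>j\<in>J. \<Sum>k\<in>J. v j * (if j = k then r else 0) * v k)"
    by (simp only: sum.distrib sum_distrib_left)
  finally show ?thesis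
    unfolding G_def quadratic_form_weighted_gram quadratic_form_diagonal .
qed

lemma pos_def_on_gram_plus_ridge:
  fixes x :: "nat \<Rightarrow> real^'p::finite"
  assumes c: "c \<ge> 0" and r: "r > 0" and d: "\<And>i. d i \<ge> 0"
  shows "pos_def_on \<gamma> (\<lambda>j k. c * (\<Sum>i<n. x i $ j * d i * x i $ k) + (if j = k then r else 0))"
  unfolding pos_def_on_def quadratic_form_gram_plus_ridge
proof (intro allI impI)
  fix v :: "'p \<Rightarrow> real"
  assume "\<exists>j\<in>\<gamma>. v j \<noteq> 0"
  then obtain j0 where "j0 \<in> \<gamma>" "v j0 \<noteq> 0" by blast
  then show "c * (\<Sum>i<n. d i * (\<Sum>j\<in>\<gamma>. v j * x i $ j)\<^sup>2) + r * (\<Sum>j\<in>\<gamma>. (v j)\<^sup>2) > 0"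
    using c d r
    by (intro add_nonneg_pos mult_nonneg_nonneg mult_pos_pos sum_nonneg sum_pos2[of \<gamma> j0]) auto
qed

locale quasi_posterior =
  fixes \<mu> \<mu>' \<mu>'' V V' :: "real \<Rightarrow> real"
    and Y :: "real set" and a \<psi> s :: real
  assumes Y_interval: "is_interval Y" and a_in: "a \<in> Y"
    and mu_range: "\<And>\<eta>. \<mu> \<eta> \<in> Y"
    and mu_d1: "\<And>\<eta>. (\<mu> has_real_derivative \<mu>' \<eta>) (at \<eta>)"
    and mu_d2: "\<And>\<eta>. (\<mu>' has_real_derivative \<mu>'' \<eta>) (at \<eta>)"
    and V_pos: "\<And>t. t \<in> Y \<Longrightarrow> V t > 0"
    and V_d: "\<And>t. t \<in> Y \<Longrightarrow> (V has_real_derivative V' t) (at t within Y)"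
    and psi_pos: "\<psi> > 0" and s_pos: "s > 0"
begin

definition score_weight :: "real \<Rightarrow> real" where
  "score_weight \<eta> = \<mu>' \<eta> / (\<psi> * V (\<mu> \<eta>))"

definition score_weight' :: "real \<Rightarrow> real" where
  "score_weight' \<eta> =
     (\<mu>'' \<eta> * V (\<mu> \<eta>) - V' (\<mu> \<eta>) * (\<mu>' \<eta>)\<^sup>2) / (\<psi> * (V (\<mu> \<eta>))\<^sup>2)"

definition qll_deriv :: "real \<Rightarrow> real \<Rightarrow> real" where
  "qll_deriv y \<eta> = (y - \<mu> \<eta>) * score_weight \<eta>"

definition qll_deriv2 :: "real \<Rightarrow> real \<Rightarrow> real" where
  "qll_deriv2 y \<eta> = - \<mu>' \<eta> * score_weight \<eta> + (y - \<mu> \<eta>) * score_weight' \<eta>"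

definition fisher_weight :: "real \<Rightarrow> real" where
  "fisher_weight \<eta> = (\<mu>' \<eta>)\<^sup>2 / V (\<mu> \<eta>)"

lemma V_mu_pos: "V (\<mu> \<eta>) > 0"
  using V_pos mu_range by blast

lemma fisher_weight_nonneg: "fisher_weight \<eta> \<ge> 0"
  using V_mu_pos[of \<eta>] by (simp add: fisher_weight_def)

lemma V_mu_has_real_derivative:
  "((\<lambda>\<eta>. V (\<mu> \<eta>)) has_real_derivative V' (\<mu> \<eta>) * \<mu>' \<eta>) (at \<eta>)"
proof -
  have "(V has_real_derivative V' (\<mu> \<eta>)) (at (\<mu> \<eta>) within range \<mu>)"
    using V_d[OF mu_range] by (rule has_field_derivative_subset) (use mu_range in auto)
  from DERIV_image_chain[OF this mu_d1] show ?thesis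
    by (simp add: o_def)
qed

lemma qll_has_real_derivative: "(qll \<mu> V a \<psi> y has_real_derivative qll_deriv y \<eta>) (at \<eta>)"
proof -
  have "continuous_on Y V"
    using V_d by (meson DERIV_continuous continuous_on_eq_continuous_within)
  then have "continuous_on Y (\<lambda>t. (y - t) / (\<psi> * V t))"
    using psi_pos by (auto intro!: continuous_intros dest: V_pos)
  from oint_comp_has_real_derivative[OF Y_interval a_in this mu_range mu_d1] show ?thesis
    by (simp add: qll_def[abs_def] qll_deriv_def score_weight_def)
qed

lemma score_weight_has_real_derivative: "(score_weight has_real_derivative score_weight' \<eta>) (at \<eta>)"
proof -
  have "((\<lambda>\<eta>. \<mu>' \<eta> / (\<psi> * V (\<mu> \<eta>))) has_real_derivative
      (\<mu>'' \<eta> * (\<psi> * V (\<mu> \<eta>)) - \<mu>' \<eta> * (\<psi> * (V' (\<mu> \<eta>) * \<mu>' \<eta>)))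
        / ((\<psi> * V (\<mu> \<eta>)) * (\<psi> * V (\<mu> \<eta>)))) (at \<eta>)"
    using psi_pos V_mu_pos[of \<eta>]
    by (intro DERIV_divide mu_d2 DERIV_cmult V_mu_has_real_derivative) simp
  moreover have "(\<mu>'' \<eta> * (\<psi> * V (\<mu> \<eta>)) - \<mu>' \<eta> * (\<psi> * (V' (\<mu> \<eta>) * \<mu>' \<eta>)))
        / ((\<psi> * V (\<mu> \<eta>)) * (\<psi> * V (\<mu> \<eta>))) = score_weight' \<eta>"
    using psi_pos V_mu_pos[of \<eta>]
    by (simp add: score_weight'_def power2_eq_square field_simps)
  ultimately show ?thesis
    by (simp add: score_weight_def[abs_def])
qed

lemma qll_deriv_has_real_derivative: "(qll_deriv y has_real_derivative qll_deriv2 y \<eta>) (at \<eta>)"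
  unfolding qll_deriv_def[abs_def] qll_deriv2_def
  by (auto intro!: derivative_eq_intros mu_d1 score_weight_has_real_derivative simp: algebra_simps)

lemma qll_deriv2_eq_fisher_weight:
  assumes "V' (\<mu> \<eta>) / V (\<mu> \<eta>) * (\<mu>' \<eta>)\<^sup>2 - \<mu>'' \<eta> = 0"
  shows "qll_deriv2 y \<eta> = - fisher_weight \<eta> / \<psi>"
proof -
  have "\<mu>'' \<eta> * V (\<mu> \<eta>) - V' (\<mu> \<eta>) * (\<mu>' \<eta>)\<^sup>2 = 0"
    using assms V_mu_pos[of \<eta>] by (simp add: field_simps)
  then have "score_weight' \<eta> = 0"
    by (simp add: score_weight'_def)
  then show ?thesis
    by (simp add: qll_deriv2_def score_weight_def fisher_weight_def power2_eq_square)
qed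

lemma convex_on_neg_qll:
  assumes R: "convex R"
    and canonical: "\<And>\<eta>. \<eta> \<in> R \<Longrightarrow> V' (\<mu> \<eta>) / V (\<mu> \<eta>) * (\<mu>' \<eta>)\<^sup>2 - \<mu>'' \<eta> = 0"
  shows "convex_on R (\<lambda>\<eta>. - qll \<mu> V a \<psi> y \<eta>)"
proof (rule convex_on_realI)
  show "connected R"
    using R by (rule convex_connected)
  show "((\<lambda>\<eta>. - qll \<mu> V a \<psi> y \<eta>) has_real_derivative - qll_deriv y \<eta>) (at \<eta>)" for \<eta>
    by (rule DERIV_minus[OF qll_has_real_derivative])
  fix p q assume p: "p \<in> R" and q: "q \<in> R" and "p \<le> q"
  show "- qll_deriv y p \<le> - qll_deriv y q"
  proof (rule DERIV_nonneg_imp_increasing_open[OF \<open>p \<le> q\<close>])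
    fix z assume "p < z" "z < q"
    then have "z \<in> R"
      using R p q unfolding is_interval_convex_1[symmetric] is_interval_1 by (meson less_imp_le)
    then have "- qll_deriv2 y z \<ge> 0"
      using qll_deriv2_eq_fisher_weight[OF canonical] fisher_weight_nonneg psi_pos by simp
    then show "\<exists>D. ((\<lambda>\<eta>. - qll_deriv y \<eta>) has_real_derivative D) (at z) \<and> D \<ge> 0"
      using DERIV_minus[OF qll_deriv_has_real_derivative] by blast
  next
    show "continuous_on {p..q} (\<lambda>\<eta>. - qll_deriv y \<eta>)"
      using DERIV_isCont[OF DERIV_minus[OF qll_deriv_has_real_derivative]]
      by (blast intro: continuous_at_imp_continuous_on)
  qed
qed

lemma mn_eq:
  "mn \<mu> V a \<psi> s n y x \<gamma> b = (\<Sum>i<n. - qll \<mu> V a \<psi> (y i) (lin_pred (x i) \<gamma> b))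
     + (\<Sum>j\<in>\<gamma>. (b $ j)\<^sup>2) / (2 * s\<^sup>2) + real (card \<gamma>) / 2 * ln (2 * pi * s\<^sup>2)"
proof -
  have "real n * Qn \<mu> V a \<psi> n y x \<gamma> b = (\<Sum>i<n. qll \<mu> V a \<psi> (y i) (lin_pred (x i) \<gamma> b))"
    by (cases "n = 0") (simp_all add: Qn_def)
  moreover have "ln (gauss_prior s \<gamma> b)
      = - real (card \<gamma>) / 2 * ln (2 * pi * s\<^sup>2) - (\<Sum>j\<in>\<gamma>. (b $ j)\<^sup>2) / (2 * s\<^sup>2)"
    using s_pos by (simp add: gauss_prior_def ln_mult)
  ultimately show ?thesis
    by (simp add: mn_def sum_negf)
qed

definition grad_mn ::
    "nat \<Rightarrow> (nat \<Rightarrow> real) \<Rightarrow> (nat \<Rightarrow> real^'p::finite) \<Rightarrow> 'p set \<Rightarrow> 'p \<Rightarrow> real^'p \<Rightarrow> real"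
  where "grad_mn n y x \<gamma> k b =
    (\<Sum>i<n. - qll_deriv (y i) (lin_pred (x i) \<gamma> b) * x i $ k) + b $ k / s\<^sup>2"

lemma partial_deriv_mn:
  assumes k: "k \<in> \<gamma>"
  shows "partial_deriv (mn \<mu> V a \<psi> s n y x \<gamma>) k b = grad_mn n y x \<gamma> k b"
proof (rule partial_derivI)
  have "((\<lambda>t. \<Sum>i<n. - qll \<mu> V a \<psi> (y i) (lin_pred (x i) \<gamma> (b + t *\<^sub>R axis k 1)))
      has_real_derivative (\<Sum>i<n. - qll_deriv (y i) (lin_pred (x i) \<gamma> b) * x i $ k)) (at 0)"
    by (intro DERIV_sum lin_pred_has_real_derivative_along_axis DERIV_minus
        qll_has_real_derivative k)
  moreover have "((\<lambda>t. ((\<Sum>j\<in>\<gamma>. (b $ j)\<^sup>2) + 2 * t * b $ k + t\<^sup>2) / (2 * s\<^sup>2)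
      + real (card \<gamma>) / 2 * ln (2 * pi * s\<^sup>2)) has_real_derivative b $ k / s\<^sup>2) (at 0)"
    using s_pos by (auto intro!: derivative_eq_intros simp: field_simps)
  ultimately show "((\<lambda>t. mn \<mu> V a \<psi> s n y x \<gamma> (b + t *\<^sub>R axis k 1))
      has_real_derivative grad_mn n y x \<gamma> k b) (at 0)"
    unfolding mn_eq sum_power2_along_axis[OF k] grad_mn_def add.assoc by (rule DERIV_add)
qed

lemma hessian_entry_mn:
  assumes j: "j \<in> \<gamma>" and k: "k \<in> \<gamma>"
  shows "hessian_entry (mn \<mu> V a \<psi> s n y x \<gamma>) j k b
    = (\<Sum>i<n. - qll_deriv2 (y i) (lin_pred (x i) \<gamma> b) * x i $ j * x i $ k)
      + (if j = k then 1 / s\<^sup>2 else 0)"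
proof -
  have "hessian_entry (mn \<mu> V a \<psi> s n y x \<gamma>) j k b = partial_deriv (grad_mn n y x \<gamma> k) j b"
    unfolding hessian_entry_def partial_deriv_mn[OF k] ..
  also have "\<dots> = (\<Sum>i<n. - qll_deriv2 (y i) (lin_pred (x i) \<gamma> b) * x i $ j * x i $ k)
      + (if j = k then 1 / s\<^sup>2 else 0)"
  proof (rule partial_derivI)
    have "((\<lambda>t. \<Sum>i<n. - qll_deriv (y i) (lin_pred (x i) \<gamma> (b + t *\<^sub>R axis j 1)) * x i $ k)
        has_real_derivative (\<Sum>i<n. - qll_deriv2 (y i) (lin_pred (x i) \<gamma> b) * x i $ k * x i $ j))
        (at 0)"
      by (intro DERIV_sum lin_pred_has_real_derivative_along_axis DERIV_cmult_right DERIV_minus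
          qll_deriv_has_real_derivative j)
    moreover have "((\<lambda>t. (b $ k + t * (if k = j then 1 else 0)) / s\<^sup>2)
        has_real_derivative (if j = k then 1 / s\<^sup>2 else 0)) (at 0)"
    proof -
      have "((\<lambda>t. b $ k + t * (if k = j then 1 else 0))
          has_real_derivative (if k = j then 1 else 0)) (at 0)"
        by (auto intro!: derivative_eq_intros)
      from DERIV_cdivide[OF this, where c = "s\<^sup>2"] show ?thesis
        by (cases "j = k") auto
    qed
    ultimately show "((\<lambda>t. grad_mn n y x \<gamma> k (b + t *\<^sub>R axis j 1)) has_real_derivative
        (\<Sum>i<n. - qll_deriv2 (y i) (lin_pred (x i) \<gamma> b) * x i $ j * x i $ k)
          + (if j = k then 1 / s\<^sup>2 else 0)) (at 0)"
      unfolding grad_mn_def nth_add_scaleR_axis by (simp add: DERIV_add mult_ac)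
  qed
  finally show ?thesis .
qed

lemma convex_on_mn:
  fixes x :: "nat \<Rightarrow> real^'p::finite"
  assumes canonical: "\<forall>i<n. \<forall>b\<in>model_space \<gamma>.
      V' (\<mu> (lin_pred (x i) \<gamma> b)) / V (\<mu> (lin_pred (x i) \<gamma> b))
        * (\<mu>' (lin_pred (x i) \<gamma> b))\<^sup>2 - \<mu>'' (lin_pred (x i) \<gamma> b) = 0"
  shows "convex_on (model_space \<gamma>) (mn \<mu> V a \<psi> s n y x \<gamma>)"
proof -
  let ?S = "model_space \<gamma>"
  have "convex_on ?S (\<lambda>b. - qll \<mu> V a \<psi> (y i) (lin_pred (x i) \<gamma> b))" if "i < n" for i
    using convex_linear_image[OF linear_lin_pred convex_model_space] canonical that
    by (intro convex_on_comp_linear[OF linear_lin_pred convex_model_space], intro convex_on_neg_qll)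
      auto
  then have likelihood: "convex_on ?S (\<lambda>b. \<Sum>i<n. - qll \<mu> V a \<psi> (y i) (lin_pred (x i) \<gamma> b))"
    by (intro convex_on_sum_fun convex_model_space) auto
  have "convex_on ?S (\<lambda>b. (b $ j)\<^sup>2)" for j
  proof (rule convex_on_comp_linear[where h = power2])
    show "linear (\<lambda>b::real^'p. b $ j)"
      by (rule bounded_linear_vec_nth[THEN bounded_linear.linear])
    then show "convex_on ((\<lambda>b. b $ j) ` ?S) power2"
      by (intro convex_on_subset[OF convex_power2] convex_linear_image convex_model_space) auto
  qed (rule convex_model_space)
  then have prior: "convex_on ?S (\<lambda>b. (\<Sum>j\<in>\<gamma>. (b $ j)\<^sup>2) / (2 * s\<^sup>2))"
    by (intro convex_on_cdiv convex_on_sum_fun convex_model_space) auto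
  show ?thesis
    unfolding mn_eq[abs_def]
    by (intro convex_on_add likelihood prior convex_on_const[THEN iffD2] convex_model_space)
qed

lemma expectation_qll_deriv2:
  assumes "prob_space M" and "integrable M Z" and "(\<integral>\<omega>. Z \<omega> \<partial>M) = \<mu> \<eta>"
  shows "integrable M (\<lambda>\<omega>. qll_deriv2 (Z \<omega>) \<eta>)"
    and "(\<integral>\<omega>. qll_deriv2 (Z \<omega>) \<eta> \<partial>M) = - fisher_weight \<eta> / \<psi>"
proof -
  interpret M: prob_space M by fact
  show "integrable M (\<lambda>\<omega>. qll_deriv2 (Z \<omega>) \<eta>)"
    using assms(2) by (simp add: qll_deriv2_def)
  have "(\<integral>\<omega>. qll_deriv2 (Z \<omega>) \<eta> \<partial>M) = - \<mu>' \<eta> * score_weight \<eta>"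
    using assms(2,3) by (simp add: qll_deriv2_def M.prob_space)
  then show "(\<integral>\<omega>. qll_deriv2 (Z \<omega>) \<eta> \<partial>M) = - fisher_weight \<eta> / \<psi>"
    by (simp add: score_weight_def fisher_weight_def power2_eq_square)
qed

lemma expectation_hessian_entry_mn:
  fixes Z :: "'w \<Rightarrow> nat \<Rightarrow> real" and x :: "nat \<Rightarrow> real^'p::finite"
  assumes M: "prob_space M" and j: "j \<in> \<gamma>" and k: "k \<in> \<gamma>"
    and Z_int: "\<And>i. i < n \<Longrightarrow> integrable M (\<lambda>\<omega>. Z \<omega> i)"
    and Z_mean: "\<And>i. i < n \<Longrightarrow> (\<integral>\<omega>. Z \<omega> i \<partial>M) = \<mu> (lin_pred (x i) \<gamma> b)"
  shows "integrable M (\<lambda>\<omega>. hessian_entry (mn \<mu> V a \<psi> s n (Z \<omega>) x \<gamma>) j k b)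
    \<and> (\<integral>\<omega>. hessian_entry (mn \<mu> V a \<psi> s n (Z \<omega>) x \<gamma>) j k b \<partial>M)
      = (1 / \<psi>) * (\<Sum>i<n. x i $ j * fisher_weight (lin_pred (x i) \<gamma> b) * x i $ k)
        + (if j = k then 1 / s\<^sup>2 else 0)"
proof -
  interpret M: prob_space M by (rule M)
  define h where "h i = (\<lambda>\<omega>. - qll_deriv2 (Z \<omega> i) (lin_pred (x i) \<gamma> b) * x i $ j * x i $ k)" for i
  have hessian: "(\<lambda>\<omega>. hessian_entry (mn \<mu> V a \<psi> s n (Z \<omega>) x \<gamma>) j k b)
      = (\<lambda>\<omega>. (\<Sum>i<n. h i \<omega>) + (if j = k then 1 / s\<^sup>2 else 0))"
    by (simp add: hessian_entry_mn[OF j k] h_def)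
  have h_int: "integrable M (h i)"
    and h_mean: "(\<integral>\<omega>. h i \<omega> \<partial>M)
      = (1 / \<psi>) * (x i $ j * fisher_weight (lin_pred (x i) \<gamma> b) * x i $ k)"
    if "i < n" for i
    using expectation_qll_deriv2[OF M Z_int[OF that] Z_mean[OF that]] by (simp_all add: h_def)
  have sum_int: "integrable M (\<lambda>\<omega>. \<Sum>i<n. h i \<omega>)"
    using h_int by (intro Bochner_Integration.integrable_sum) auto
  then have "integrable M (\<lambda>\<omega>. (\<Sum>i<n. h i \<omega>) + (if j = k then 1 / s\<^sup>2 else 0))"
    by simp
  moreover have "(\<integral>\<omega>. (\<Sum>i<n. h i \<omega>) + (if j = k then 1 / s\<^sup>2 else 0) \<partial>M)
      = (\<integral>\<omega>. (\<Sum>i<n. h i \<omega>) \<partial>M) + (if j = k then 1 / s\<^sup>2 else 0)"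
    using sum_int by (simp add: M.prob_space)
  moreover have "(\<integral>\<omega>. (\<Sum>i<n. h i \<omega>) \<partial>M) = (\<Sum>i<n. \<integral>\<omega>. h i \<omega> \<partial>M)"
    using h_int by (simp add: Bochner_Integration.integral_sum)
  ultimately show ?thesis
    unfolding hessian by (simp add: h_mean sum_distrib_left)
qed

end

theorem proposition3:
  fixes \<mu> \<mu>' \<mu>'' V V' :: "real \<Rightarrow> real"
    and Y :: "real set" and a \<psi> s :: real
    and n :: nat and x :: "nat \<Rightarrow> real^'p::finite" and \<gamma> :: "'p set"
  assumes Y_interval: "is_interval Y" and a_in: "a \<in> Y"
    and mu_range: "\<And>\<eta>. \<mu> \<eta> \<in> Y"
    and mu_d1: "\<And>\<eta>. (\<mu> has_real_derivative \<mu>' \<eta>) (at \<eta>)"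
    and mu_d2: "\<And>\<eta>. (\<mu>' has_real_derivative \<mu>'' \<eta>) (at \<eta>)"
    and V_pos: "\<And>t. t \<in> Y \<Longrightarrow> V t > 0"
    and V_d: "\<And>t. t \<in> Y \<Longrightarrow> (V has_real_derivative V' t) (at t within Y)"
    and psi_pos: "\<psi> > 0" and s_pos: "s > 0"
    and rank: "full_col_rank n x \<gamma>"
  shows
    "(\<forall>y. (\<forall>i<n. y i \<in> Y) \<longrightarrow>
        (\<forall>i<n. \<forall>b\<in>model_space \<gamma>.
           V' (\<mu> (lin_pred (x i) \<gamma> b)) / V (\<mu> (lin_pred (x i) \<gamma> b))
             * (\<mu>' (lin_pred (x i) \<gamma> b))\<^sup>2 - \<mu>'' (lin_pred (x i) \<gamma> b) = 0) \<longrightarrow>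
        convex_on (model_space \<gamma>) (mn \<mu> V a \<psi> s n y x \<gamma>))
     \<and>
     (\<forall>(M :: 'w measure) (yr :: 'w \<Rightarrow> nat \<Rightarrow> real) (\<beta>s :: real^'p).
        prob_space M \<longrightarrow>
        (\<forall>\<omega>\<in>space M. \<forall>i<n. yr \<omega> i \<in> Y) \<longrightarrow>
        (\<forall>i<n. integrable M (\<lambda>\<omega>. yr \<omega> i)
               \<and> (\<integral>\<omega>. yr \<omega> i \<partial>M) = \<mu> (\<Sum>j\<in>UNIV. x i $ j * \<beta>s $ j)) \<longrightarrow>
        {j. \<beta>s $ j \<noteq> 0} \<subseteq> \<gamma> \<longrightarrow>
        (let d = (\<lambda>i. (\<mu>' (lin_pred (x i) \<gamma> (restr \<gamma> \<beta>s)))\<^sup>2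
                        / V (\<mu> (lin_pred (x i) \<gamma> (restr \<gamma> \<beta>s))));
             A = (\<lambda>j k. (1 / \<psi>) * (\<Sum>i<n. x i $ j * d i * x i $ k)
                         + (if j = k then 1 / s\<^sup>2 else 0))
         in (\<forall>j\<in>\<gamma>. \<forall>k\<in>\<gamma>.
               integrable M (\<lambda>\<omega>. hessian_entry (mn \<mu> V a \<psi> s n (yr \<omega>) x \<gamma>) j k (restr \<gamma> \<beta>s))
             \<and> (\<integral>\<omega>. hessian_entry (mn \<mu> V a \<psi> s n (yr \<omega>) x \<gamma>) j k (restr \<gamma> \<beta>s) \<partial>M) = A j k)
            \<and> pos_def_on \<gamma> A))"
proof -
  interpret quasi_posterior \<mu> \<mu>' \<mu>'' V V' Y a \<psi> s
    by unfold_locales (fact Y_interval a_in mu_range mu_d1 mu_d2 V_pos V_d psi_pos s_pos)+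
  show ?thesis
  proof (intro conjI allI impI, goal_cases)
    case (1 y)
    from 1(2) show ?case
      by (rule convex_on_mn)
  next
    case (2 M yr \<beta>s)
    let ?\<eta> = "\<lambda>i. lin_pred (x i) \<gamma> (restr \<gamma> \<beta>s)"
    have hessian: "\<forall>j\<in>\<gamma>. \<forall>k\<in>\<gamma>.
        integrable M (\<lambda>\<omega>. hessian_entry (mn \<mu> V a \<psi> s n (yr \<omega>) x \<gamma>) j k (restr \<gamma> \<beta>s))
        \<and> (\<integral>\<omega>. hessian_entry (mn \<mu> V a \<psi> s n (yr \<omega>) x \<gamma>) j k (restr \<gamma> \<beta>s) \<partial>M)
          = (1 / \<psi>) * (\<Sum>i<n. x i $ j * fisher_weight (?\<eta> i) * x i $ k)
            + (if j = k then 1 / s\<^sup>2 else 0)"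
      using 2(3) by (intro ballI expectation_hessian_entry_mn[OF 2(1)])
        (simp_all add: lin_pred_restr[OF 2(4)])
    have pos_def: "pos_def_on \<gamma> (\<lambda>j k. (1 / \<psi>) * (\<Sum>i<n. x i $ j * fisher_weight (?\<eta> i) * x i $ k)
        + (if j = k then 1 / s\<^sup>2 else 0))"
      using psi_pos s_pos by (intro pos_def_on_gram_plus_ridge fisher_weight_nonneg) simp_all
    show ?case
      using hessian pos_def unfolding Let_def fisher_weight_def by (rule conjI)
  qed
qed

end
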